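(* Let $\varepsilon\in[0,1)$ and $\mathcal{P},\mathcal{E}\subseteq\mathcal{D}(P)$. Then $$\beta\overline{C}_{\mathrm{GPO},\varepsilon}(\mathcal{P},\mathcal{E})=D^{\mathcal{E}}_{\max,\varepsilon}(\mathcal{P}\|\mathcal{E}).$$
   Context: All Hilbert spaces are finite-dimensional; $\mathcal{D}(P)$ is the set of density operators on $P$; $T(X,Y)=\tfrac12\|X-Y\|_1$; $\mathcal{B}_\varepsilon(\mathcal{P})=\{\omega\in\mathcal{D}:T(\omega,\rho)\le\varepsilon\text{ for some }\rho\in\mathcal{P}\}$. Battery: qubit $B$ with basis $\{|0\rangle,|1\rangle\}$, $\pi_M=(1-\tfrac1M)|0\rangle\langle0|+\tfrac1M|1\rangle\langle1|$ for $M>1$, $\Pi_M=\{\pi_{M'}:M'\in[M,\infty)\}$. The one-shot work cost from a dirty battery under a class $\mathfrak{F}$ is $\beta\overline{C}_{\mathfrak{F},\varepsilon}(\mathcal{P},\mathcal{E})=\log\inf\{M>1:\exists\mathcal{F}\in\mathfrak{F}\text{ with } T(\mathcal{F}(|1\rangle\langle1|),\rho)\le\varepsilon\text{ for some }\rho\in\mathcal{P}\text{ and }\mathcal{F}(\sigma)\in\mathcal{E}\ \forall\sigma\in\Pi_M\}$; GPO here means the class of CPTP maps from $B$ to $P$, Gibbs preservation being the condition $\mathcal{F}(\Pi_M)\subseteq\mathcal{E}$. For $\mathcal{K}\subseteq\mathcal{D}$, with $\operatorname{cl}(\mathcal{K})$ its closure and $\mathcal{C}(\gamma,\omega,1/M)=\{(1-\lambda)\gamma+\lambda\omega:\lambda\in(0,1/M]\}$,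 the subspace-constrained max-relative entropy is $D^{\mathcal{K}}_{\max,\varepsilon}(\mathcal{P}\|\mathcal{E})=\log\inf\{M>1:\gamma\in\operatorname{cl}(\mathcal{K}),\ \omega\in\mathcal{B}_\varepsilon(\mathcal{P}),\ \mathcal{C}(\gamma,\omega,1/M)\subseteq\mathcal{E}\}$ (with $\log\inf\emptyset=+\infty$). *)

theory Defs
  imports "Jordan_Normal_Form.Jordan_Normal_Form" "Jordan_Normal_Form.Schur_Decomposition" "HOL-Library.Extended_Real"
begin

definition mtrace :: "complex mat \<Rightarrow> complex" where
  "mtrace A = (\<Sum>i < dim_row A. A $$ (i, i))"

definition psd_mat :: "nat \<Rightarrow> complex mat \<Rightarrow> bool" where
  "psd_mat n A \<longleftrightarrow> A \<in> carrier_mat n n \<and> mat_adjoint A = A \<and>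
     (\<forall>v \<in> carrier_vec n. 0 \<le> Re (conjugate v \<bullet> (A *\<^sub>v v)))"

text \<open>Density operators D(P) on P = C^n.\<close>
definition density_ops :: "nat \<Rightarrow> complex mat set" where
  "density_ops n = {\<rho>. psd_mat n \<rho> \<and> mtrace \<rho> = 1}"

definition eigvals_list :: "complex mat \<Rightarrow> complex list" where
  "eigvals_list A = (SOME as. char_poly A = (\<Prod>a \<leftarrow> as. [:- a, 1:]))"

text \<open>Trace norm ||X||_1 = tr sqrt(X^* X) = sum of the square roots of the eigenvalues of X^* X.\<close>
definition trace_norm :: "complex mat \<Rightarrow> real" where
  "trace_norm X = sum_list (map (\<lambda>a. sqrt (Re a)) (eigvals_list (mat_adjoint X * X)))"

definition trace_dist :: "complex mat \<Rightarrow> complex mat \<Rightarrow> real" where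
  "trace_dist X Y = trace_norm (X - Y) / 2"

definition eps_ball :: "nat \<Rightarrow> real \<Rightarrow> complex mat set \<Rightarrow> complex mat set" where
  "eps_ball n \<epsilon> \<P> = {\<omega> \<in> density_ops n. \<exists>\<rho> \<in> \<P>. trace_dist \<omega> \<rho> \<le> \<epsilon>}"

text \<open>Closure of a set of n x n matrices (w.r.t. the trace norm; all norms are equivalent).\<close>
definition mat_closure :: "nat \<Rightarrow> complex mat set \<Rightarrow> complex mat set" where
  "mat_closure n K = {\<gamma> \<in> carrier_mat n n. \<forall>\<delta>>0. \<exists>\<kappa> \<in> K. trace_norm (\<gamma> - \<kappa>) < \<delta>}"

section \<open>Battery qubit B\<close>

definition ket1_proj :: "complex mat" where
  "ket1_proj = mat 2 2 (\<lambda>(i,j). if i = 1 \<and> j = 1 then 1 else 0)"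

definition pi_M :: "real \<Rightarrow> complex mat" where
  "pi_M M = mat 2 2 (\<lambda>(i,j). if i = 0 \<and> j = 0 then complex_of_real (1 - 1/M)
                        else if i = 1 \<and> j = 1 then complex_of_real (1/M) else 0)"

definition Pi_M :: "real \<Rightarrow> complex mat set" where
  "Pi_M M = {pi_M M' | M'. M' \<ge> M}"

text \<open>(id_k \<otimes> F) applied to a (2k) x (2k) block matrix X: block (i,j) becomes F(X_ij).\<close>
definition id_tensor :: "nat \<Rightarrow> nat \<Rightarrow> (complex mat \<Rightarrow> complex mat) \<Rightarrow> complex mat \<Rightarrow> complex mat" where
  "id_tensor n k F X = mat (k * n) (k * n) (\<lambda>(a,b).
      F (mat 2 2 (\<lambda>(r,c). X $$ (2 * (a div n) + r, 2 * (b div n) + c))) $$ (a mod n, b mod n))"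

definition CPTP_B :: "nat \<Rightarrow> (complex mat \<Rightarrow> complex mat) \<Rightarrow> bool" where
  "CPTP_B n F \<longleftrightarrow>
     (\<forall>X \<in> carrier_mat 2 2. F X \<in> carrier_mat n n) \<and>
     (\<forall>X \<in> carrier_mat 2 2. \<forall>Y \<in> carrier_mat 2 2. \<forall>a b :: complex.
         F (a \<cdot>\<^sub>m X + b \<cdot>\<^sub>m Y) = a \<cdot>\<^sub>m F X + b \<cdot>\<^sub>m F Y) \<and>
     (\<forall>X \<in> carrier_mat 2 2. mtrace (F X) = mtrace X) \<and>
     (\<forall>k X. psd_mat (2 * k) X \<longrightarrow> psd_mat (k * n) (id_tensor n k F X))"

definition log_inf :: "real set \<Rightarrow> ereal" where
  "log_inf S = (if S = {} then \<infinity> else ereal (log 2 (Inf S)))"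

definition work_cost_GPO :: "nat \<Rightarrow> real \<Rightarrow> complex mat set \<Rightarrow> complex mat set \<Rightarrow> ereal" where
  "work_cost_GPO n \<epsilon> \<P> \<E> = log_inf {M. M > 1 \<and> (\<exists>F. CPTP_B n F \<and>
      (\<exists>\<rho> \<in> \<P>. trace_dist (F ket1_proj) \<rho> \<le> \<epsilon>) \<and> (\<forall>\<sigma> \<in> Pi_M M. F \<sigma> \<in> \<E>))}"

definition segment_C :: "complex mat \<Rightarrow> complex mat \<Rightarrow> real \<Rightarrow> complex mat set" where
  "segment_C \<gamma> \<omega> t = {complex_of_real (1 - l) \<cdot>\<^sub>m \<gamma> + complex_of_real l \<cdot>\<^sub>m \<omega> | l. 0 < l \<and> l \<le> t}"

definition Dmax_constr :: "nat \<Rightarrow> complex mat set \<Rightarrow> real \<Rightarrow> complex mat set \<Rightarrow> complex mat set \<Rightarrow> ereal" where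
  "Dmax_constr n K \<epsilon> \<P> \<E> = log_inf {M. M > 1 \<and> (\<exists>\<gamma> \<in> mat_closure n K. \<exists>\<omega> \<in> eps_ball n \<epsilon> \<P>.
      segment_C \<gamma> \<omega> (1 / M) \<subseteq> \<E>)}"

end

theory Submission
  imports Defs "Jordan_Normal_Form.Jordan_Normal_Form_Existence"
begin

text \<open>
  Both sides are log inf over sets of M > 1, and the two sets coincide. If a channel F
  maps every \<open>\<pi>\<^sub>M'\<close> with M' \<ge> M into E, put \<open>\<gamma> = F |0\<rangle>\<langle>0|\<close> and
  \<open>\<omega> = F |1\<rangle>\<langle>1|\<close>: by linearity \<open>F \<pi>\<^sub>M' = (1 - 1/M') \<gamma> + (1/M') \<omega>\<close>, so the segment
  of length 1/M lies in E, \<open>\<omega>\<close> is a state, and \<open>\<gamma>\<close> is the limit M' \<rightarrow> \<infinity>, hence lies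
  in the closure of E. Conversely, \<open>\<gamma>\<close> is then itself a state (a limit of states along
  the segment), and the measure-and-prepare channel \<open>Y \<mapsto> Y\<^sub>0\<^sub>0 \<gamma> + Y\<^sub>1\<^sub>1 \<omega>\<close> is Gibbs
  preserving. Its complete positivity is the only substantial point: writing \<open>\<gamma>\<close> and
  \<open>\<omega>\<close> as sums of rank-one terms \<open>u u\<^sup>*\<close> (by successive Schur complements), every block
  matrix \<open>(id \<otimes> F) X\<close> becomes a sum of congruences of X.
\<close>

section \<open>Positive semidefinite kernels\<close>

text \<open>
  Hermitian forms are handled as kernels \<open>nat \<Rightarrow> nat \<Rightarrow> complex\<close> restricted to indices
  below n, so that principal submatrices and block matrices of varying size need no
  dimension bookkeeping.
\<close>

definition qform :: "nat \<Rightarrow> (nat \<Rightarrow> nat \<Rightarrow> complex) \<Rightarrow> (nat \<Rightarrow> complex) \<Rightarrow> complex" where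
  "qform n g x = (\<Sum>i<n. \<Sum>j<n. cnj (x i) * g i j * x j)"

definition psd_kernel :: "nat \<Rightarrow> (nat \<Rightarrow> nat \<Rightarrow> complex) \<Rightarrow> bool" where
  "psd_kernel n g \<longleftrightarrow> (\<forall>i<n. \<forall>j<n. g j i = cnj (g i j)) \<and> (\<forall>x. 0 \<le> Re (qform n g x))"

lemma psd_kernelI:
  "(\<And>i j. i < n \<Longrightarrow> j < n \<Longrightarrow> g j i = cnj (g i j)) \<Longrightarrow> (\<And>x. 0 \<le> Re (qform n g x))
   \<Longrightarrow> psd_kernel n g"
  unfolding psd_kernel_def by blast

lemma psd_kernel_herm: "psd_kernel n g \<Longrightarrow> i < n \<Longrightarrow> j < n \<Longrightarrow> g j i = cnj (g i j)"
  unfolding psd_kernel_def by blast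

lemma psd_kernel_qform_nonneg: "psd_kernel n g \<Longrightarrow> 0 \<le> Re (qform n g x)"
  unfolding psd_kernel_def by blast

lemma psd_kernel_diag_real:
  assumes "psd_kernel n g" "i < n"
  shows "g i i = complex_of_real (Re (g i i))"
proof -
  have "cnj (g i i) = g i i" using psd_kernel_herm[OF assms assms(2)] by simp
  then show ?thesis by (metis Reals_cnj_iff of_real_Re)
qed

lemma psd_kernel_cong:
  assumes g: "psd_kernel n g" and eq: "\<And>i j. i < n \<Longrightarrow> j < n \<Longrightarrow> h i j = g i j"
  shows "psd_kernel n h"
proof (rule psd_kernelI)
  fix i j assume "i < n" "j < n"
  then show "h j i = cnj (h i j)" using psd_kernel_herm[OF g] eq by metis
next
  fix x
  have "qform n h x = qform n g x"
    unfolding qform_def using eq by (intro sum.cong refl) auto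
  then show "0 \<le> Re (qform n h x)" using psd_kernel_qform_nonneg[OF g] by simp
qed

lemma qform_lincomb:
  "qform n (\<lambda>i j. a * g i j + b * h i j) x = a * qform n g x + b * qform n h x"
  unfolding qform_def by (simp add: sum.distrib sum_distrib_left algebra_simps)

lemma psd_kernel_add:
  assumes g: "psd_kernel n g" and h: "psd_kernel n h"
  shows "psd_kernel n (\<lambda>i j. g i j + h i j)"
proof (rule psd_kernelI)
  fix i j assume ij: "i < n" "j < n"
  show "g j i + h j i = cnj (g i j + h i j)"
    by (simp add: psd_kernel_herm[OF g ij] psd_kernel_herm[OF h ij])
next
  fix x show "0 \<le> Re (qform n (\<lambda>i j. g i j + h i j) x)"
    using psd_kernel_qform_nonneg[OF g] psd_kernel_qform_nonneg[OF h] qform_lincomb[of n 1 g 1 h x]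
    by simp
qed

lemma sum_fibres:
  fixes f :: "nat \<Rightarrow> nat"
  assumes "\<And>a. a < k \<Longrightarrow> f a < m"
  shows "(\<Sum>i<m. \<Sum>a | a < k \<and> f a = i. h a) = (\<Sum>a<k. h a)"
proof -
  have "f ` {..<k} \<subseteq> {..<m}" using assms by auto
  then show ?thesis using sum.group[of "{..<k}" "{..<m}" f h] by simp
qed

lemma qform_congruence:
  assumes f: "\<And>a. a < k \<Longrightarrow> f a < m"
  shows "qform k (\<lambda>a b. c a * g (f a) (f b) * cnj (c b)) x
       = qform m g (\<lambda>i. \<Sum>b | b < k \<and> f b = i. cnj (c b) * x b)"
    (is "_ = qform m g ?y")
proof -
  let ?F = "\<lambda>i. {a. a < k \<and> f a = i}"
  have inner: "(\<Sum>b<k. cnj (x a) * (c a * g (f a) (f b) * cnj (c b)) * x b)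
      = (\<Sum>j<m. cnj (x a) * c a * g (f a) j * ?y j)" for a
  proof -
    have "(\<Sum>b<k. cnj (x a) * (c a * g (f a) (f b) * cnj (c b)) * x b)
        = (\<Sum>j<m. \<Sum>b\<in>?F j. cnj (x a) * (c a * g (f a) (f b) * cnj (c b)) * x b)"
      by (rule sum_fibres[OF f, symmetric])
    also have "\<dots> = (\<Sum>j<m. \<Sum>b\<in>?F j. cnj (x a) * c a * g (f a) j * (cnj (c b) * x b))"
      by (intro sum.cong refl) (auto simp: algebra_simps)
    finally show ?thesis by (simp add: sum_distrib_left)
  qed
  have "qform k (\<lambda>a b. c a * g (f a) (f b) * cnj (c b)) x
      = (\<Sum>a<k. \<Sum>j<m. cnj (x a) * c a * g (f a) j * ?y j)"
    unfolding qform_def inner ..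
  also have "\<dots> = (\<Sum>i<m. \<Sum>a\<in>?F i. \<Sum>j<m. cnj (x a) * c a * g (f a) j * ?y j)"
    by (rule sum_fibres[OF f, symmetric])
  also have "\<dots> = (\<Sum>i<m. \<Sum>a\<in>?F i. \<Sum>j<m. cnj (x a) * c a * g i j * ?y j)"
    by (intro sum.cong refl) auto
  also have "\<dots> = (\<Sum>i<m. \<Sum>j<m. \<Sum>a\<in>?F i. cnj (x a) * c a * g i j * ?y j)"
    by (intro sum.cong refl sum.swap)
  also have "\<dots> = qform m g ?y"
    unfolding qform_def by (simp add: sum_distrib_left sum_distrib_right cnj_sum algebra_simps)
  finally show ?thesis .
qed

lemma psd_kernel_congruence:
  assumes g: "psd_kernel m g" and f: "\<And>a. a < k \<Longrightarrow> f a < m"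
  shows "psd_kernel k (\<lambda>a b. c a * g (f a) (f b) * cnj (c b))"
proof (rule psd_kernelI)
  fix a b assume "a < k" "b < k"
  then show "c b * g (f b) (f a) * cnj (c a) = cnj (c a * g (f a) (f b) * cnj (c b))"
    by (simp add: psd_kernel_herm[OF g f[OF \<open>a < k\<close>] f[OF \<open>b < k\<close>]])
next
  fix x show "0 \<le> Re (qform k (\<lambda>a b. c a * g (f a) (f b) * cnj (c b)) x)"
    using qform_congruence[of k f m c g x] f psd_kernel_qform_nonneg[OF g] by simp
qed

lemma psd_kernel_reindex:
  assumes "psd_kernel m g" and "\<And>a. a < k \<Longrightarrow> f a < m"
  shows "psd_kernel k (\<lambda>a b. g (f a) (f b))"
  using psd_kernel_congruence[OF assms, where c = "\<lambda>_. 1"] by simp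

section \<open>Rank-one decomposition\<close>

lemma psd_kernel_diag_nonneg:
  assumes "psd_kernel n g" "i < n"
  shows "0 \<le> Re (g i i)"
proof -
  have "psd_kernel 1 (\<lambda>_ _. g i i)" using psd_kernel_reindex[OF assms(1), of 1 "\<lambda>_. i"] assms(2) by simp
  from psd_kernel_qform_nonneg[OF this, of "\<lambda>_. 1"] show ?thesis by (simp add: qform_def)
qed

lemma psd_kernel_col_zero_if_diag_zero:
  assumes g: "psd_kernel m g" and i: "i < m" and j: "j < m" and jj: "g j j = 0"
  shows "g i j = 0"
proof (rule ccontr)
  assume "g i j \<noteq> 0"
  define b where "b = g i j"
  define a where "a = Re (g i i)"
  define f where "f p = (if p = 0 then i else j)" for p :: nat
  have h: "psd_kernel 2 (\<lambda>p q. g (f p) (f q))"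
    by (rule psd_kernel_reindex[OF g]) (simp add: f_def i j)
  have gii: "g i i = complex_of_real a" unfolding a_def by (rule psd_kernel_diag_real[OF g i])
  have gji: "g j i = cnj b" unfolding b_def by (rule psd_kernel_herm[OF g i j])
  define s where "s = 1 / (\<bar>a\<bar> + 1)"
  have s: "s > 0" "s * a < 1" unfolding s_def by (auto simp: field_simps)
  define x where "x p = (if p = 0 then - complex_of_real s * b else 1)" for p :: nat
    \<comment> \<open>on the submatrix \<open>[[a, b], [conj b, 0]]\<close> its value is \<open>s |b|\<^sup>2 (s a - 2) < 0\<close>\<close>
  have "qform 2 (\<lambda>p q. g (f p) (f q)) x
      = complex_of_real s * complex_of_real s * complex_of_real a * (b * cnj b) - 2 * complex_of_real s * (b * cnj b)"
    unfolding qform_def f_def x_def by (simp add: numeral_2_eq_2 gii gji jj b_def[symmetric] algebra_simps)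
  also have "b * cnj b = complex_of_real ((cmod b)\<^sup>2)" by (rule complex_norm_square[symmetric])
  finally have "qform 2 (\<lambda>p q. g (f p) (f q)) x = complex_of_real (s * (cmod b)\<^sup>2 * (s * a - 2))"
    by (simp add: algebra_simps)
  then have "Re (qform 2 (\<lambda>p q. g (f p) (f q)) x) = s * (cmod b)\<^sup>2 * (s * a - 2)" by simp
  also have "\<dots> < 0" using s \<open>g i j \<noteq> 0\<close> unfolding b_def by (intro mult_pos_neg) auto
  finally show False using psd_kernel_qform_nonneg[OF h, of x] by simp
qed

lemma qform_Suc:
  "qform (Suc n) g x = qform n g x + (\<Sum>i<n. cnj (x i) * g i n) * x n
     + cnj (x n) * (\<Sum>j<n. g n j * x j) + cnj (x n) * g n n * x n"
  unfolding qform_def by (simp add: sum.distrib sum_distrib_left sum_distrib_right algebra_simps)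

text \<open>If \<open>g n n = 0\<close>, division by zero makes the Schur complement the plain restriction.\<close>

lemma psd_kernel_schur_complement:
  assumes g: "psd_kernel (Suc n) g"
  shows "psd_kernel n (\<lambda>i j. g i j - g i n * g n j / g n n)"
proof (cases "g n n = 0")
  case True
  then show ?thesis using psd_kernel_reindex[OF g, of n id] by simp
next
  case False
  define d where "d = g n n"
  have d: "d \<noteq> 0" "cnj d = d" using False psd_kernel_herm[OF g, of n n] by (auto simp: d_def)
  have herm: "g j i = cnj (g i j)" if "i < Suc n" "j < Suc n" for i j
    using psd_kernel_herm[OF g that] .
  show ?thesis unfolding d_def[symmetric]
  proof (rule psd_kernelI)
    fix i j assume "i < n" "j < n"
    then show "g j i - g j n * g n i / d = cnj (g i j - g i n * g n j / d)"
      using herm[of i j] herm[of i n] herm[of n j] d by simp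
  next
    fix x
    define s where "s = (\<Sum>j<n. g n j * x j)"
    define y where "y i = (if i < n then x i else - s / d)" for i
      \<comment> \<open>the last coordinate minimizing the form; its value is the Schur complement form at x\<close>
    have cx: "(\<Sum>i<n. cnj (x i) * g i n) = cnj s"
      unfolding s_def cnj_sum by (intro sum.cong refl) (simp add: herm[of _ n])
    then have cs: "(\<Sum>i<n. cnj (y i) * g i n) = cnj s" by (simp add: y_def)
    have "qform n g y = qform n g x" unfolding qform_def y_def by simp
    moreover have "(\<Sum>j<n. g n j * y j) = s" unfolding s_def y_def by simp
    ultimately have "qform (Suc n) g y = qform n g x - cnj s * s / d"
      unfolding qform_Suc cs d_def[symmetric] using d by (simp add: y_def field_simps)
    also have "\<dots> = qform n (\<lambda>i j. g i j - g i n * g n j / d) x"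
    proof -
      have "(\<Sum>i<n. \<Sum>j<n. cnj (x i) * (g i n * g n j / d) * x j) = cnj s * s / d"
        unfolding cx[symmetric] unfolding s_def sum_product sum_divide_distrib
        by (intro sum.cong refl) (simp add: mult_ac)
      then show ?thesis
        unfolding qform_def by (simp add: right_diff_distrib left_diff_distrib sum_subtractf)
    qed
    finally show "0 \<le> Re (qform n (\<lambda>i j. g i j - g i n * g n j / d) x)"
      using psd_kernel_qform_nonneg[OF g, of y] by simp
  qed
qed

lemma psd_kernel_last_row_col:
  assumes g: "psd_kernel (Suc n) g" and ij: "i < Suc n" "j < Suc n" "i = n \<or> j = n"
  shows "g i j = g i n * g n j / g n n"
proof (cases "g n n = 0")
  case True
  have col: "g k n = 0" if "k < Suc n" for k using psd_kernel_col_zero_if_diag_zero[OF g that _ True] by simp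
  have "g i n = 0" using col[OF ij(1)] .
  moreover have "g n j = 0" using psd_kernel_herm[OF g ij(2), of n] col[OF ij(2)] by simp
  ultimately show ?thesis using ij True by auto
next
  case False
  then show ?thesis using ij by auto
qed

lemma psd_kernel_rank_one_decomposition:
  "psd_kernel n g \<Longrightarrow> \<exists>us. \<forall>i<n. \<forall>j<n. g i j = (\<Sum>u\<leftarrow>us. u i * cnj (u j))"
proof (induction n arbitrary: g)
  case (Suc n)
  obtain us where us: "\<And>i j. i < n \<Longrightarrow> j < n \<Longrightarrow>
      g i j - g i n * g n j / g n n = (\<Sum>u\<leftarrow>us. u i * cnj (u j))"
    using Suc.IH[OF psd_kernel_schur_complement[OF Suc.prems]] by blast
  define d where "d = Re (g n n)"
  have gnn: "g n n = complex_of_real d" unfolding d_def by (rule psd_kernel_diag_real[OF Suc.prems]) simp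
  have "d \<ge> 0" unfolding d_def by (rule psd_kernel_diag_nonneg[OF Suc.prems]) simp
  define u0 where "u0 i = g i n / complex_of_real (sqrt d)" for i
    \<comment> \<open>for \<open>d = 0\<close> this is 0, matching the vanishing last row and column\<close>
  have u0: "u0 i * cnj (u0 j) = g i n * g n j / g n n" if "j < Suc n" for i j
  proof -
    have "cnj (g j n) = g n j" using psd_kernel_herm[OF Suc.prems that, of n] by simp
    moreover have "complex_of_real (sqrt d) * complex_of_real (sqrt d) = g n n"
      using \<open>d \<ge> 0\<close> gnn by (simp flip: of_real_mult)
    ultimately show ?thesis unfolding u0_def by (simp add: field_simps)
  qed
  define extend where "extend u i = (if i < n then u i else 0)" for u :: "nat \<Rightarrow> complex" and i
  show ?case
  proof (intro exI allI impI)
    fix i j assume "i < Suc n" "j < Suc n"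
    show "g i j = (\<Sum>u\<leftarrow>u0 # map extend us. u i * cnj (u j))"
    proof (cases "i < n \<and> j < n")
      case True
      then have "g i j = u0 i * cnj (u0 j) + (\<Sum>u\<leftarrow>us. u i * cnj (u j))"
        using us[of i j] u0[OF \<open>j < Suc n\<close>] by (simp add: diff_eq_eq add.commute)
      then show ?thesis using True by (simp add: extend_def o_def)
    next
      case False
      then have "i = n \<or> j = n" using \<open>i < Suc n\<close> \<open>j < Suc n\<close> by auto
      then have "g i j = u0 i * cnj (u0 j)"
        using psd_kernel_last_row_col[OF Suc.prems \<open>i < Suc n\<close> \<open>j < Suc n\<close>] u0[OF \<open>j < Suc n\<close>] by simp
      then show ?thesis using False by (auto simp: extend_def o_def)
    qed
  qed
qed simp

lemma psd_kernel_zero: "psd_kernel n (\<lambda>_ _. 0)"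
  by (rule psd_kernelI) (simp_all add: qform_def)

lemma psd_kernel_sum_list:
  "(\<And>u. u \<in> set us \<Longrightarrow> psd_kernel n (K u)) \<Longrightarrow> psd_kernel n (\<lambda>i j. \<Sum>u\<leftarrow>us. K u i j)"
  by (induction us) (simp_all add: psd_kernel_zero psd_kernel_add)

section \<open>Positive semidefinite matrices and the measure-and-prepare channel\<close>

lemma dim_mat_adjoint [simp]:
  "dim_row (mat_adjoint A) = dim_col A" "dim_col (mat_adjoint A) = dim_row A"
  unfolding mat_adjoint_def by auto

lemma index_mat_adjoint [simp]:
  "i < dim_col A \<Longrightarrow> j < dim_row A \<Longrightarrow> mat_adjoint A $$ (i, j) = cnj (A $$ (j, i))"
  unfolding mat_adjoint_def by (simp add: mat_of_rows_def)

lemma quadratic_form_eq_qform: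
  assumes "A \<in> carrier_mat n n" "v \<in> carrier_vec n"
  shows "conjugate v \<bullet> (A *\<^sub>v v) = qform n (\<lambda>i j. A $$ (i, j)) (\<lambda>i. v $ i)"
  using assms by (simp add: qform_def scalar_prod_def sum_distrib_left atLeast0LessThan mult.assoc)

lemma mat_adjoint_eq_iff:
  assumes A: "A \<in> carrier_mat n n"
  shows "mat_adjoint A = A \<longleftrightarrow> (\<forall>i<n. \<forall>j<n. A $$ (j, i) = cnj (A $$ (i, j)))"
proof
  assume adj: "mat_adjoint A = A"
  show "\<forall>i<n. \<forall>j<n. A $$ (j, i) = cnj (A $$ (i, j))"
  proof (intro allI impI)
    fix i j assume "i < n" "j < n"
    have "A $$ (j, i) = mat_adjoint A $$ (j, i)" using adj by simp
    also have "\<dots> = cnj (A $$ (i, j))"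
      by (rule index_mat_adjoint) (use A \<open>i < n\<close> \<open>j < n\<close> in auto)
    finally show "A $$ (j, i) = cnj (A $$ (i, j))" .
  qed
next
  assume herm: "\<forall>i<n. \<forall>j<n. A $$ (j, i) = cnj (A $$ (i, j))"
  show "mat_adjoint A = A"
  proof (rule eq_matI)
    fix i j assume "i < dim_row A" "j < dim_col A"
    then have ij: "i < n" "j < n" using A by auto
    then have "A $$ (i, j) = cnj (A $$ (j, i))" using herm by blast
    then show "mat_adjoint A $$ (i, j) = A $$ (i, j)" using A ij by simp
  qed (use A in auto)
qed

lemma quadratic_form_nonneg_iff_qform_nonneg:
  assumes A: "A \<in> carrier_mat n n"
  shows "(\<forall>v \<in> carrier_vec n. 0 \<le> Re (conjugate v \<bullet> (A *\<^sub>v v)))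
     \<longleftrightarrow> (\<forall>x. 0 \<le> Re (qform n (\<lambda>i j. A $$ (i, j)) x))"
proof safe
  fix v :: "complex vec" assume "\<forall>x. 0 \<le> Re (qform n (\<lambda>i j. A $$ (i, j)) x)" "v \<in> carrier_vec n"
  then show "0 \<le> Re (conjugate v \<bullet> (A *\<^sub>v v))" using quadratic_form_eq_qform[OF A] by simp
next
  fix x assume "\<forall>v \<in> carrier_vec n. 0 \<le> Re (conjugate v \<bullet> (A *\<^sub>v v))"
  then have "0 \<le> Re (conjugate (vec n x) \<bullet> (A *\<^sub>v vec n x))" using vec_carrier by blast
  then have "0 \<le> Re (qform n (\<lambda>i j. A $$ (i, j)) (\<lambda>i. vec n x $ i))"
    unfolding quadratic_form_eq_qform[OF A vec_carrier] .
  also have "qform n (\<lambda>i j. A $$ (i, j)) (\<lambda>i. vec n x $ i) = qform n (\<lambda>i j. A $$ (i, j)) x"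
    unfolding qform_def by (intro sum.cong refl) simp
  finally show "0 \<le> Re (qform n (\<lambda>i j. A $$ (i, j)) x)" .
qed

lemma psd_mat_iff_psd_kernel:
  "psd_mat n A \<longleftrightarrow> A \<in> carrier_mat n n \<and> psd_kernel n (\<lambda>i j. A $$ (i, j))"
  unfolding psd_mat_def psd_kernel_def
  using mat_adjoint_eq_iff quadratic_form_nonneg_iff_qform_nonneg by blast

definition measure_prepare :: "complex mat \<Rightarrow> complex mat \<Rightarrow> complex mat \<Rightarrow> complex mat" where
  "measure_prepare \<gamma> \<omega> Y = Y $$ (0, 0) \<cdot>\<^sub>m \<gamma> + Y $$ (1, 1) \<cdot>\<^sub>m \<omega>"

lemma index_id_tensor_measure_prepare:
  assumes "\<gamma> \<in> carrier_mat n n" "\<omega> \<in> carrier_mat n n" "a < k * n" "b < k * n"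
  shows "id_tensor n k (measure_prepare \<gamma> \<omega>) X $$ (a, b)
       = X $$ (2 * (a div n), 2 * (b div n)) * \<gamma> $$ (a mod n, b mod n)
       + X $$ (2 * (a div n) + 1, 2 * (b div n) + 1) * \<omega> $$ (a mod n, b mod n)"
proof -
  have "n > 0" using assms(3) by (cases n) auto
  then show ?thesis using assms unfolding id_tensor_def measure_prepare_def by simp
qed

text \<open>
  With \<open>\<gamma> = \<Sum> u u\<^sup>*\<close> and \<open>\<omega> = \<Sum> v v\<^sup>*\<close>, the entry of \<open>(id \<otimes> F) X\<close> at
  \<open>(p n + i, q n + j)\<close> is \<open>\<Sum> u i X(2p, 2q) conj (u j) + \<Sum> v i X(2p+1, 2q+1) conj (v j)\<close>,
  a sum of congruences of X.
\<close>

lemma psd_mat_id_tensor_measure_prepare: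
  assumes \<gamma>: "psd_mat n \<gamma>" and \<omega>: "psd_mat n \<omega>" and X: "psd_mat (2 * k) X"
  shows "psd_mat (k * n) (id_tensor n k (measure_prepare \<gamma> \<omega>) X)"
proof -
  have \<gamma>c: "\<gamma> \<in> carrier_mat n n" and \<gamma>k: "psd_kernel n (\<lambda>i j. \<gamma> $$ (i, j))"
   and \<omega>c: "\<omega> \<in> carrier_mat n n" and \<omega>k: "psd_kernel n (\<lambda>i j. \<omega> $$ (i, j))"
    using \<gamma> \<omega> by (simp_all add: psd_mat_iff_psd_kernel)
  obtain us where us: "\<forall>i<n. \<forall>j<n. \<gamma> $$ (i, j) = (\<Sum>u\<leftarrow>us. u i * cnj (u j))"
    using psd_kernel_rank_one_decomposition[OF \<gamma>k] by blast
  obtain vs where vs: "\<forall>i<n. \<forall>j<n. \<omega> $$ (i, j) = (\<Sum>v\<leftarrow>vs. v i * cnj (v j))"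
    using psd_kernel_rank_one_decomposition[OF \<omega>k] by blast
  have X: "psd_kernel (2 * k) (\<lambda>i j. X $$ (i, j))" using X by (simp add: psd_mat_iff_psd_kernel)
  define f where "f t a = 2 * (a div n) + t" for t a :: nat
  have f: "f t a < 2 * k" if "t < 2" "a < k * n" for t a
  proof -
    have "a div n < k" using that(2) by (simp add: less_mult_imp_div_less)
    then show ?thesis using that(1) unfolding f_def by linarith
  qed
  have "psd_kernel (k * n) (\<lambda>a b. (\<Sum>u\<leftarrow>us. u (a mod n) * X $$ (f 0 a, f 0 b) * cnj (u (b mod n)))
      + (\<Sum>v\<leftarrow>vs. v (a mod n) * X $$ (f 1 a, f 1 b) * cnj (v (b mod n))))"
    by (intro psd_kernel_add psd_kernel_sum_list psd_kernel_congruence[OF X] f) simp_all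
  then have "psd_kernel (k * n) (\<lambda>a b. id_tensor n k (measure_prepare \<gamma> \<omega>) X $$ (a, b))"
  proof (rule psd_kernel_cong)
    fix a b assume ab: "a < k * n" "b < k * n"
    then have "a mod n < n" "b mod n < n" by (cases n; simp)+
    then show "id_tensor n k (measure_prepare \<gamma> \<omega>) X $$ (a, b)
      = (\<Sum>u\<leftarrow>us. u (a mod n) * X $$ (f 0 a, f 0 b) * cnj (u (b mod n)))
      + (\<Sum>v\<leftarrow>vs. v (a mod n) * X $$ (f 1 a, f 1 b) * cnj (v (b mod n)))"
      unfolding index_id_tensor_measure_prepare[OF \<gamma>c \<omega>c ab] using us vs
      by (simp add: f_def sum_list_mult_const[symmetric] mult_ac)
  qed
  then show ?thesis unfolding psd_mat_iff_psd_kernel id_tensor_def by simp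
qed

lemma mtrace_lincomb:
  assumes "A \<in> carrier_mat n n" "B \<in> carrier_mat n n"
  shows "mtrace (a \<cdot>\<^sub>m A + b \<cdot>\<^sub>m B) = a * mtrace A + b * mtrace B"
  using assms unfolding mtrace_def by (simp add: sum.distrib sum_distrib_left)

lemma mtrace_2: "X \<in> carrier_mat 2 2 \<Longrightarrow> mtrace X = X $$ (0, 0) + X $$ (1, 1)"
  unfolding mtrace_def by (simp add: numeral_2_eq_2)

lemma CPTP_B_measure_prepare:
  assumes \<gamma>: "\<gamma> \<in> density_ops n" and \<omega>: "\<omega> \<in> density_ops n"
  shows "CPTP_B n (measure_prepare \<gamma> \<omega>)"
proof -
  have \<gamma>p: "psd_mat n \<gamma>" "mtrace \<gamma> = 1" and \<omega>p: "psd_mat n \<omega>" "mtrace \<omega> = 1"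
    using \<gamma> \<omega> unfolding density_ops_def by auto
  then have \<gamma>c: "\<gamma> \<in> carrier_mat n n" and \<omega>c: "\<omega> \<in> carrier_mat n n" unfolding psd_mat_def by auto
  show ?thesis unfolding CPTP_B_def
  proof (intro conjI ballI allI impI)
    fix X :: "complex mat"
    show "measure_prepare \<gamma> \<omega> X \<in> carrier_mat n n" unfolding measure_prepare_def using \<gamma>c \<omega>c by simp
  next
    fix X Y :: "complex mat" and a b :: complex
    assume "X \<in> carrier_mat 2 2" "Y \<in> carrier_mat 2 2"
    then show "measure_prepare \<gamma> \<omega> (a \<cdot>\<^sub>m X + b \<cdot>\<^sub>m Y)
        = a \<cdot>\<^sub>m measure_prepare \<gamma> \<omega> X + b \<cdot>\<^sub>m measure_prepare \<gamma> \<omega> Y"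
      unfolding measure_prepare_def using \<gamma>c \<omega>c by (intro eq_matI) (auto simp: algebra_simps)
  next
    fix X :: "complex mat" assume "X \<in> carrier_mat 2 2"
    then show "mtrace (measure_prepare \<gamma> \<omega> X) = mtrace X"
      unfolding measure_prepare_def mtrace_lincomb[OF \<gamma>c \<omega>c] mtrace_2[OF \<open>X \<in> carrier_mat 2 2\<close>]
      using \<gamma>p \<omega>p by simp
  next
    fix k X assume "psd_mat (2 * k) X"
    then show "psd_mat (k * n) (id_tensor n k (measure_prepare \<gamma> \<omega>) X)"
      by (rule psd_mat_id_tensor_measure_prepare[OF \<gamma>p(1) \<omega>p(1)])
  qed
qed

section \<open>Scaling the trace norm\<close>

lemma proots_prod_linear: "proots (\<Prod>a\<leftarrow>as. [:- a, 1:]) = mset (as :: 'a :: idom list)"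
proof (induction as)
  case (Cons a as)
  let ?P = "\<Prod>a\<leftarrow>as. [:- a, 1:]"
  have "?P \<noteq> 0" by (auto simp: prod_list_zero_iff)
  then have "proots ([:- a, 1:] * ?P) = proots [:- a, 1:] + proots ?P" by (intro proots_mult) auto
  also have "\<dots> = add_mset a (mset as)" using Cons.IH by simp
  finally show ?case unfolding list.map prod_list.Cons mset.simps .
qed simp

lemma mset_eigvals_list:
  fixes A :: "complex mat"
  assumes "A \<in> carrier_mat n n"
  shows "mset (eigvals_list A) = proots (char_poly A)"
proof -
  obtain as where "char_poly A = (\<Prod>a\<leftarrow>as. [:- a, 1:])" using char_poly_factorized[OF assms] by blast
  then have "char_poly A = (\<Prod>a\<leftarrow>eigvals_list A. [:- a, 1:])"
    unfolding eigvals_list_def by (rule someI)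
  then show ?thesis by (simp add: proots_prod_linear)
qed

lemma proots_char_poly_smult:
  fixes A :: "complex mat"
  assumes A: "A \<in> carrier_mat n n" and k: "k \<noteq> 0"
  shows "proots (char_poly (k \<cdot>\<^sub>m A)) = image_mset ((*) k) (proots (char_poly A))"
proof (rule multiset_eqI)
  fix x
  have nz: "char_poly B \<noteq> 0" if "B \<in> carrier_mat n n" for B :: "complex mat"
    using degree_monic_char_poly[OF that] by auto
  have pre: "(*) k -` {x} = {x / k}" using k by (auto simp: field_simps)
  have "count (proots (char_poly (k \<cdot>\<^sub>m A))) x = Polynomial.order (x / k) (char_poly A)"
    using nz[of "k \<cdot>\<^sub>m A"] A by (simp add: order_char_poly_smult[OF A k])
  also have "\<dots> = count (image_mset ((*) k) (proots (char_poly A))) x"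
    unfolding count_image_mset pre using nz[OF A]
    by (cases "x / k \<in># proots (char_poly A)") (auto simp: not_in_iff order_0I)
  finally show "count (proots (char_poly (k \<cdot>\<^sub>m A))) x = count (image_mset ((*) k) (proots (char_poly A))) x" .
qed

lemma trace_norm_smult:
  assumes Y: "Y \<in> carrier_mat n n" and r: "0 < r"
  shows "trace_norm (complex_of_real r \<cdot>\<^sub>m Y) = r * trace_norm Y"
proof -
  let ?c = "complex_of_real r" and ?B = "mat_adjoint Y * Y"
  have B: "?B \<in> carrier_mat n n" using Y by auto
  have "mat_adjoint (?c \<cdot>\<^sub>m Y) * (?c \<cdot>\<^sub>m Y) = (?c * ?c) \<cdot>\<^sub>m ?B"
  proof -
    have "mat_adjoint (?c \<cdot>\<^sub>m Y) = ?c \<cdot>\<^sub>m mat_adjoint Y" by (rule eq_matI) auto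
    then show ?thesis using Y by (auto simp: mult_smult_assoc_mat mult_smult_distrib)
  qed
  moreover have "?c * ?c \<noteq> 0" using r by simp
  ultimately have "mset (eigvals_list (mat_adjoint (?c \<cdot>\<^sub>m Y) * (?c \<cdot>\<^sub>m Y)))
      = image_mset ((*) (?c * ?c)) (mset (eigvals_list ?B))"
    using mset_eigvals_list[OF B] mset_eigvals_list[OF smult_carrier_mat[OF B]] proots_char_poly_smult[OF B]
    by simp
  moreover have "sqrt (Re (?c * ?c * a)) = r * sqrt (Re a)" for a
    using r by (simp add: real_sqrt_mult)
  ultimately show ?thesis
    unfolding trace_norm_def sum_mset_sum_list[symmetric] mset_map
    by (simp add: multiset.map_comp o_def sum_mset_distrib_left)
qed

section \<open>Segments and the two constructions\<close>

definition mixture :: "complex mat \<Rightarrow> complex mat \<Rightarrow> real \<Rightarrow> complex mat" where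
  "mixture \<gamma> \<omega> l = complex_of_real (1 - l) \<cdot>\<^sub>m \<gamma> + complex_of_real l \<cdot>\<^sub>m \<omega>"

lemma segment_C_eq: "segment_C \<gamma> \<omega> t = {mixture \<gamma> \<omega> l | l. 0 < l \<and> l \<le> t}"
  unfolding segment_C_def mixture_def by simp

lemma measure_prepare_pi_M: "measure_prepare \<gamma> \<omega> (pi_M M) = mixture \<gamma> \<omega> (1 / M)"
  unfolding measure_prepare_def pi_M_def mixture_def by simp

lemma measure_prepare_ket1_proj:
  "\<gamma> \<in> carrier_mat n n \<Longrightarrow> \<omega> \<in> carrier_mat n n \<Longrightarrow> measure_prepare \<gamma> \<omega> ket1_proj = \<omega>"
  unfolding measure_prepare_def ket1_proj_def by (intro eq_matI) auto

lemma nonneg_if_affine_nonneg_at_right_0: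
  fixes a b t :: real
  assumes "0 < t" and "\<And>l. 0 < l \<Longrightarrow> l \<le> t \<Longrightarrow> 0 \<le> (1 - l) * a + l * b"
  shows "0 \<le> a"
proof (rule tendsto_lowerbound)
  have "((\<lambda>l. (1 - l) * a + l * b) \<longlongrightarrow> (1 - 0) * a + 0 * b) (at_right 0)"
    by (intro tendsto_intros)
  then show "((\<lambda>l. (1 - l) * a + l * b) \<longlongrightarrow> a) (at_right 0)" by simp
  show "\<forall>\<^sub>F l in at_right 0. 0 \<le> (1 - l) * a + l * b"
    unfolding eventually_at_right_field using assms by (intro exI[of _ t]) auto
qed simp

lemma psd_kernel_segment_endpoint:
  assumes w: "psd_kernel n w" and t: "0 < t"
    and seg: "\<And>l. 0 < l \<Longrightarrow> l \<le> t \<Longrightarrow>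
      psd_kernel n (\<lambda>i j. complex_of_real (1 - l) * g i j + complex_of_real l * w i j)"
  shows "psd_kernel n g"
proof (rule psd_kernelI)
  fix i j assume ij: "i < n" "j < n"
  define l where "l = min t (1 / 2)"
  have l: "0 < l" "l \<le> t" "l < 1" using t unfolding l_def by auto
  have "complex_of_real (1 - l) * g j i + complex_of_real l * w j i
      = cnj (complex_of_real (1 - l) * g i j + complex_of_real l * w i j)"
    by (rule psd_kernel_herm[OF seg[OF l(1,2)] ij])
  then have "complex_of_real (1 - l) * g j i = complex_of_real (1 - l) * cnj (g i j)"
    using psd_kernel_herm[OF w ij] by simp
  then show "g j i = cnj (g i j)" using l(3) by simp
next
  fix x
  show "0 \<le> Re (qform n g x)"
  proof (rule nonneg_if_affine_nonneg_at_right_0[OF t])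
    fix l :: real assume "0 < l" "l \<le> t"
    from psd_kernel_qform_nonneg[OF seg[OF this], of x]
    show "0 \<le> (1 - l) * Re (qform n g x) + l * Re (qform n w x)"
      by (simp add: qform_lincomb)
  qed
qed

lemma density_ops_segment_endpoint:
  assumes \<gamma>: "\<gamma> \<in> carrier_mat n n" and \<omega>: "\<omega> \<in> density_ops n" and t: "0 < t"
    and seg: "\<And>l. 0 < l \<Longrightarrow> l \<le> t \<Longrightarrow> mixture \<gamma> \<omega> l \<in> density_ops n"
  shows "\<gamma> \<in> density_ops n"
proof -
  have \<omega>c: "\<omega> \<in> carrier_mat n n" and \<omega>k: "psd_kernel n (\<lambda>i j. \<omega> $$ (i, j))" and "mtrace \<omega> = 1"
    using \<omega> unfolding density_ops_def psd_mat_iff_psd_kernel by auto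
  have "psd_kernel n (\<lambda>i j. \<gamma> $$ (i, j))"
  proof (rule psd_kernel_segment_endpoint[OF \<omega>k t])
    fix l :: real assume "0 < l" "l \<le> t"
    then have "psd_kernel n (\<lambda>i j. mixture \<gamma> \<omega> l $$ (i, j))"
      using seg unfolding density_ops_def psd_mat_iff_psd_kernel by blast
    then show "psd_kernel n (\<lambda>i j. complex_of_real (1 - l) * \<gamma> $$ (i, j) + complex_of_real l * \<omega> $$ (i, j))"
      by (rule psd_kernel_cong) (use \<gamma> \<omega>c in \<open>simp add: mixture_def\<close>)
  qed
  moreover have "mtrace \<gamma> = 1"
  proof -
    define l where "l = min t (1 / 2)"
    have l: "0 < l" "l \<le> t" "l < 1" using t unfolding l_def by auto
    have "1 = mtrace (mixture \<gamma> \<omega> l)" using seg[OF l(1,2)] unfolding density_ops_def by simp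
    also have "\<dots> = complex_of_real (1 - l) * mtrace \<gamma> + complex_of_real l"
      unfolding mixture_def mtrace_lincomb[OF \<gamma> \<omega>c] \<open>mtrace \<omega> = 1\<close> by simp
    finally have "complex_of_real (1 - l) * (mtrace \<gamma> - 1) = 0" by (simp add: algebra_simps)
    then show ?thesis using l(3) by simp
  qed
  ultimately show ?thesis using \<gamma> unfolding density_ops_def psd_mat_iff_psd_kernel by simp
qed

lemma mixture_endpoint_in_mat_closure:
  assumes \<gamma>: "\<gamma> \<in> carrier_mat n n" and \<omega>: "\<omega> \<in> carrier_mat n n" and t: "0 < t"
    and seg: "\<And>l. 0 < l \<Longrightarrow> l \<le> t \<Longrightarrow> mixture \<gamma> \<omega> l \<in> K"
  shows "\<gamma> \<in> mat_closure n K"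
  unfolding mat_closure_def
proof (intro CollectI conjI allI impI \<gamma>)
  fix \<delta> :: real assume "0 < \<delta>"
  define T where "T = trace_norm (\<gamma> - \<omega>)"
    \<comment> \<open>not known to be nonnegative (sqrt of an arbitrary real), hence \<open>\<bar>T\<bar>\<close> below\<close>
  define l where "l = min t (\<delta> / (\<bar>T\<bar> + 1))"
  have l: "0 < l" "l \<le> t" using t \<open>0 < \<delta>\<close> unfolding l_def by auto
  have "\<gamma> - mixture \<gamma> \<omega> l = complex_of_real l \<cdot>\<^sub>m (\<gamma> - \<omega>)"
    unfolding mixture_def using \<gamma> \<omega> by (intro eq_matI) (auto simp: algebra_simps)
  then have "trace_norm (\<gamma> - mixture \<gamma> \<omega> l) = l * T"
    unfolding T_def using trace_norm_smult[OF minus_carrier_mat[OF \<omega>] l(1)] \<gamma> by simp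
  also have "\<dots> \<le> l * \<bar>T\<bar>" using l(1) by (simp add: mult_left_mono)
  also have "\<dots> \<le> \<delta> / (\<bar>T\<bar> + 1) * \<bar>T\<bar>" by (rule mult_right_mono) (simp_all add: l_def)
  also have "\<dots> < \<delta>" using \<open>0 < \<delta>\<close> by (simp add: field_simps)
  finally show "\<exists>\<kappa>\<in>K. trace_norm (\<gamma> - \<kappa>) < \<delta>" using seg[OF l] by blast
qed

definition ket0_proj :: "complex mat" where
  "ket0_proj = mat 2 2 (\<lambda>(i, j). if i = 0 \<and> j = 0 then 1 else 0)"

lemma pi_M_eq_mixture: "pi_M M = mixture ket0_proj ket1_proj (1 / M)"
  unfolding pi_M_def mixture_def ket0_proj_def ket1_proj_def
  by (intro eq_matI) (auto simp: numeral_2_eq_2 less_Suc_eq)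

lemma CPTP_B_mixture:
  assumes "CPTP_B n F" "X \<in> carrier_mat 2 2" "Y \<in> carrier_mat 2 2"
  shows "F (mixture X Y l) = mixture (F X) (F Y) l"
  using assms unfolding CPTP_B_def mixture_def by blast

lemma ket1_proj_density: "ket1_proj \<in> density_ops 2"
proof -
  have "psd_kernel 2 (\<lambda>i j. ket1_proj $$ (i, j))"
  proof (rule psd_kernelI)
    fix x :: "nat \<Rightarrow> complex"
    have "qform 2 (\<lambda>i j. ket1_proj $$ (i, j)) x = cnj (x 1) * x 1"
      unfolding qform_def ket1_proj_def by (simp add: numeral_2_eq_2)
    then show "0 \<le> Re (qform 2 (\<lambda>i j. ket1_proj $$ (i, j)) x)" by simp
  qed (auto simp: ket1_proj_def)
  moreover have "mtrace ket1_proj = 1" unfolding mtrace_def ket1_proj_def by (simp add: numeral_2_eq_2)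
  ultimately show ?thesis
    unfolding density_ops_def psd_mat_iff_psd_kernel by (simp add: ket1_proj_def)
qed

lemma id_tensor_1:
  assumes "F X \<in> carrier_mat n n" "X \<in> carrier_mat 2 2"
  shows "id_tensor n 1 F X = F X"
proof -
  have "mat 2 2 (\<lambda>p. X $$ p) = X" using assms(2) by (intro eq_matI) auto
  then show ?thesis using assms(1) unfolding id_tensor_def by (intro eq_matI) auto
qed

lemma CPTP_B_density_ops:
  assumes F: "CPTP_B n F" and X: "X \<in> density_ops 2"
  shows "F X \<in> density_ops n"
proof -
  have Xc: "X \<in> carrier_mat 2 2" using X unfolding density_ops_def psd_mat_def by auto
  have CP: "psd_mat (k * n) (id_tensor n k F Y)" if "psd_mat (2 * k) Y" for k Y
    using F that unfolding CPTP_B_def by blast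
  have "psd_mat (1 * n) (id_tensor n 1 F X)" by (rule CP) (use X in \<open>simp add: density_ops_def\<close>)
  moreover have "F X \<in> carrier_mat n n" using F Xc unfolding CPTP_B_def by blast
  moreover have "mtrace (F X) = 1" using F X Xc unfolding CPTP_B_def density_ops_def by simp
  ultimately show ?thesis unfolding density_ops_def using id_tensor_1[OF _ Xc] by simp
qed

lemma dmax_witness_of_gibbs_preserving_channel:
  assumes M: "1 < M"
    and "\<exists>F. CPTP_B n F \<and> (\<exists>\<rho> \<in> \<P>. trace_dist (F ket1_proj) \<rho> \<le> \<epsilon>) \<and> (\<forall>\<sigma> \<in> Pi_M M. F \<sigma> \<in> \<E>)"
  shows "\<exists>\<gamma> \<in> mat_closure n \<E>. \<exists>\<omega> \<in> eps_ball n \<epsilon> \<P>. segment_C \<gamma> \<omega> (1 / M) \<subseteq> \<E>"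
proof -
  obtain F \<rho> where F: "CPTP_B n F" and \<rho>: "\<rho> \<in> \<P>" "trace_dist (F ket1_proj) \<rho> \<le> \<epsilon>"
    and Gibbs: "\<forall>\<sigma> \<in> Pi_M M. F \<sigma> \<in> \<E>"
    using assms(2) by blast
  have ket0: "ket0_proj \<in> carrier_mat 2 2" and ket1: "ket1_proj \<in> carrier_mat 2 2"
    unfolding ket0_proj_def ket1_proj_def by simp_all
  have carrier: "F X \<in> carrier_mat n n" if "X \<in> carrier_mat 2 2" for X
    using F that unfolding CPTP_B_def by blast
  have seg: "mixture (F ket0_proj) (F ket1_proj) l \<in> \<E>" if "0 < l" "l \<le> 1 / M" for l
  proof -
    have "M \<le> 1 / l" using that M by (simp add: field_simps)
    then have "F (pi_M (1 / l)) \<in> \<E>" using Gibbs unfolding Pi_M_def by blast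
    then show ?thesis unfolding pi_M_eq_mixture CPTP_B_mixture[OF F ket0 ket1] by simp
  qed
  have "F ket0_proj \<in> mat_closure n \<E>"
    by (rule mixture_endpoint_in_mat_closure[OF carrier[OF ket0] carrier[OF ket1] _ seg]) (use M in simp_all)
  moreover have "F ket1_proj \<in> eps_ball n \<epsilon> \<P>"
    unfolding eps_ball_def using CPTP_B_density_ops[OF F ket1_proj_density] \<rho> by blast
  moreover have "segment_C (F ket0_proj) (F ket1_proj) (1 / M) \<subseteq> \<E>"
    unfolding segment_C_eq using seg by blast
  ultimately show ?thesis by blast
qed

lemma gibbs_preserving_channel_of_dmax_witness:
  assumes \<E>: "\<E> \<subseteq> density_ops n" and M: "1 < M"
    and "\<exists>\<gamma> \<in> mat_closure n \<E>. \<exists>\<omega> \<in> eps_ball n \<epsilon> \<P>. segment_C \<gamma> \<omega> (1 / M) \<subseteq> \<E>"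
  shows "\<exists>F. CPTP_B n F \<and> (\<exists>\<rho> \<in> \<P>. trace_dist (F ket1_proj) \<rho> \<le> \<epsilon>) \<and> (\<forall>\<sigma> \<in> Pi_M M. F \<sigma> \<in> \<E>)"
proof -
  obtain \<gamma> \<omega> where \<gamma>: "\<gamma> \<in> mat_closure n \<E>" and \<omega>: "\<omega> \<in> eps_ball n \<epsilon> \<P>"
    and seg: "segment_C \<gamma> \<omega> (1 / M) \<subseteq> \<E>"
    using assms(3) by blast
  have \<gamma>c: "\<gamma> \<in> carrier_mat n n" using \<gamma> unfolding mat_closure_def by auto
  have \<omega>d: "\<omega> \<in> density_ops n" and \<rho>: "\<exists>\<rho> \<in> \<P>. trace_dist \<omega> \<rho> \<le> \<epsilon>"
    using \<omega> unfolding eps_ball_def by auto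
  have \<omega>c: "\<omega> \<in> carrier_mat n n" using \<omega>d unfolding density_ops_def psd_mat_def by auto
  have seg': "mixture \<gamma> \<omega> l \<in> \<E>" if "0 < l" "l \<le> 1 / M" for l
    using seg that unfolding segment_C_eq by blast
  have \<gamma>d: "\<gamma> \<in> density_ops n"
  proof (rule density_ops_segment_endpoint[OF \<gamma>c \<omega>d])
    show "0 < 1 / M" using M by simp
    show "mixture \<gamma> \<omega> l \<in> density_ops n" if "0 < l" "l \<le> 1 / M" for l
      using seg'[OF that] \<E> by blast
  qed
  show ?thesis
  proof (intro exI conjI ballI)
    show "CPTP_B n (measure_prepare \<gamma> \<omega>)" by (rule CPTP_B_measure_prepare[OF \<gamma>d \<omega>d])
    show "\<exists>\<rho> \<in> \<P>. trace_dist (measure_prepare \<gamma> \<omega> ket1_proj) \<rho> \<le> \<epsilon>"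
      using \<rho> by (simp add: measure_prepare_ket1_proj[OF \<gamma>c \<omega>c])
  next
    fix \<sigma> assume "\<sigma> \<in> Pi_M M"
    then obtain M' where "M \<le> M'" "\<sigma> = pi_M M'" unfolding Pi_M_def by blast
    moreover have "0 < 1 / M'" "1 / M' \<le> 1 / M" using M \<open>M \<le> M'\<close> by (auto simp: field_simps)
    ultimately show "measure_prepare \<gamma> \<omega> \<sigma> \<in> \<E>" using seg' by (simp add: measure_prepare_pi_M)
  qed
qed

theorem theorem7:
  fixes n :: nat and \<epsilon> :: real and \<P> \<E> :: "complex mat set"
  assumes "0 \<le> \<epsilon>" and "\<epsilon> < 1"
    and "\<P> \<subseteq> density_ops n" and "\<E> \<subseteq> density_ops n"
  shows "work_cost_GPO n \<epsilon> \<P> \<E> = Dmax_constr n \<E> \<epsilon> \<P> \<E>"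
proof -
  \<comment> \<open>only the hypothesis on \<open>\<E>\<close> is needed\<close>
  have feasible_iff:
    "(\<exists>F. CPTP_B n F \<and> (\<exists>\<rho> \<in> \<P>. trace_dist (F ket1_proj) \<rho> \<le> \<epsilon>) \<and> (\<forall>\<sigma> \<in> Pi_M M. F \<sigma> \<in> \<E>))
     \<longleftrightarrow> (\<exists>\<gamma> \<in> mat_closure n \<E>. \<exists>\<omega> \<in> eps_ball n \<epsilon> \<P>. segment_C \<gamma> \<omega> (1 / M) \<subseteq> \<E>)"
    if "1 < M" for M
    by (rule iffI[OF dmax_witness_of_gibbs_preserving_channel[OF that]
          gibbs_preserving_channel_of_dmax_witness[OF assms(4) that]])
  show ?thesis unfolding work_cost_GPO_def Dmax_constr_def
    by (intro arg_cong[where f = log_inf] Collect_cong conj_cong refl) (erule feasible_iff)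
qed

end
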